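(* Let $A$ be a finite nonempty sum-free subset of $\mathbb N$ (i.e. $A\cap(A+A)=\emptyset$). Then $I_{\{0\}\cup A}$ is an atom of $\mathcal I(R)$.
   Context: Let $D$ be an integral domain, $N\ge2$, $R=D[X_1,\dots,X_N]$, $X=X_1$, $Y=X_2$. $\mathcal I(R)$ denotes the monoid of nonzero ideals of $R$ under ideal multiplication (identity $R$, whose only unit is $R$). Standing assumption: $\mathcal I(R)$ is a BF-monoid. An atom of $\mathcal I(R)$ is an ideal $I\in\mathcal I(R)$, $I\ne R$, such that $I=\mathfrak a\mathfrak b$ with $\mathfrak a,\mathfrak b\in\mathcal I(R)$ forces $\mathfrak a=R$ or $\mathfrak b=R$. For a finite nonempty set $B=\{n_1<\dots<n_\ell\}\subseteq\mathbb N$, $I_B:=\langle X^{n_\ell-n_i}Y^{n_i}: 1\le i\le \ell\rangle\subseteq R$. *)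

theory Defs
  imports "HOL-Library.Poly_Mapping"
begin

definition is_ideal :: "'r::comm_ring_1 set \<Rightarrow> bool" where
  "is_ideal I \<longleftrightarrow> 0 \<in> I \<and> (\<forall>a\<in>I. \<forall>b\<in>I. a + b \<in> I) \<and> (\<forall>r. \<forall>a\<in>I. r * a \<in> I)"

definition ideal_gen :: "'r::comm_ring_1 set \<Rightarrow> 'r set" where
  "ideal_gen S = \<Inter>{I. is_ideal I \<and> S \<subseteq> I}"

definition ideal_mult :: "'r::comm_ring_1 set \<Rightarrow> 'r set \<Rightarrow> 'r set" where
  "ideal_mult I J = ideal_gen {a * b | a b. a \<in> I \<and> b \<in> J}"

text \<open>The monoid of nonzero ideals (identity UNIV, the whole ring).\<close>
definition nz_ideals :: "'r::comm_ring_1 set set" where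
  "nz_ideals = {I. is_ideal I \<and> I \<noteq> {0}}"

definition ideal_atom :: "'r::comm_ring_1 set \<Rightarrow> bool" where
  "ideal_atom I \<longleftrightarrow> I \<in> nz_ideals \<and> I \<noteq> UNIV \<and>
     (\<forall>a\<in>nz_ideals. \<forall>b\<in>nz_ideals. I = ideal_mult a b \<longrightarrow> a = UNIV \<or> b = UNIV)"

definition ideal_prod :: "'r::comm_ring_1 set list \<Rightarrow> 'r set" where
  "ideal_prod xs = foldr ideal_mult xs UNIV"

definition ideal_lengths :: "'r::comm_ring_1 set \<Rightarrow> nat set" where
  "ideal_lengths I = {length xs | xs. (\<forall>J\<in>set xs. ideal_atom J) \<and> ideal_prod xs = I}"

definition ideals_BF :: "'r::comm_ring_1 itself \<Rightarrow> bool" where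
  "ideals_BF _ \<longleftrightarrow> (\<forall>I\<in>(nz_ideals :: 'r set set).
      finite (ideal_lengths I) \<and> (I \<noteq> UNIV \<longrightarrow> ideal_lengths I \<noteq> {}))"

type_synonym ('n, 'a) mpoly = "('n \<Rightarrow>\<^sub>0 nat) \<Rightarrow>\<^sub>0 'a"

definition monXY :: "'n \<Rightarrow> 'n \<Rightarrow> nat \<Rightarrow> nat \<Rightarrow> ('n, 'a::comm_ring_1) mpoly" where
  "monXY x y i j = Poly_Mapping.single (Poly_Mapping.single x i + Poly_Mapping.single y j) 1"

definition I_B :: "'n \<Rightarrow> 'n \<Rightarrow> nat set \<Rightarrow> ('n, 'a::comm_ring_1) mpoly set" where
  "I_B x y B = ideal_gen {monXY x y (Max B - n) n | n. n \<in> B}"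

definition sum_free :: "nat set \<Rightarrow> bool" where
  "sum_free A \<longleftrightarrow> (\<forall>a\<in>A. \<forall>b\<in>A. a + b \<notin> A)"

end

theory Submission
  imports Defs "HOL-Computational_Algebra.Polynomial_FPS"
begin

text \<open>Let \<open>B = {0} \<union> A\<close>, \<open>m = max B\<close> and \<open>I\<^sub>B = J K\<close>. Substituting \<open>s\<close> for every variable and
  \<open>s t\<close> for \<open>Y\<close> maps \<open>R\<close> into \<open>D[t][s]\<close>. Let \<open>a\<close>, \<open>b\<close> be the least \<open>s\<close>-degrees occurring in \<open>J\<close>
  and \<open>K\<close>, and \<open>V\<close>, \<open>W\<close> the \<open>D\<close>-modules of the corresponding coefficients (initial forms). As
  \<open>I\<^sub>B\<close> is generated in degree \<open>m\<close>, \<open>a + b = m\<close>, and every product \<open>P Q\<close> (\<open>P \<in> V\<close>, \<open>Q \<in> W\<close>) has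
  \<open>t\<close>-support in \<open>B\<close>.

  If \<open>a = 0\<close>, then \<open>J\<close> contains an element with nonzero constant term, which cancels in the
  monomial ideal \<open>I\<^sub>B\<close>; so \<open>K = I\<^sub>B = J I\<^sub>B\<close>, and the BF property forces \<open>J = R\<close>.
  If \<open>a, b > 0\<close>, then \<open>X\<^sup>m \<in> J K\<close> gives \<open>\<Sum> P\<^sub>i Q\<^sub>i = 1\<close> with \<open>P\<^sub>i \<in> V\<close>, \<open>Q\<^sub>i \<in> W\<close>; since \<open>A\<close> is
  sum-free, all nonzero elements of \<open>V\<close> (say) have nonzero constant term, which makes \<open>V\<close> consist
  of constants. But \<open>Y\<^sup>m \<in> J K\<close> produces elements of \<open>V\<close> and \<open>W\<close> of degrees \<open>a\<close> and \<open>b\<close>.\<close>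

section \<open>Ideals\<close>

lemma is_ideal_ideal_gen: "is_ideal (ideal_gen S)"
  unfolding is_ideal_def ideal_gen_def by auto

lemma ideal_gen_subset: "S \<subseteq> ideal_gen S"
  unfolding ideal_gen_def by auto

lemma ideal_gen_minimal: "is_ideal I \<Longrightarrow> S \<subseteq> I \<Longrightarrow> ideal_gen S \<subseteq> I"
  unfolding ideal_gen_def by auto

lemma ideal_0: "is_ideal I \<Longrightarrow> 0 \<in> I"
  unfolding is_ideal_def by auto

lemma ideal_add: "is_ideal I \<Longrightarrow> a \<in> I \<Longrightarrow> b \<in> I \<Longrightarrow> a + b \<in> I"
  unfolding is_ideal_def by auto

lemma ideal_mult_left: "is_ideal I \<Longrightarrow> a \<in> I \<Longrightarrow> r * a \<in> I"
  unfolding is_ideal_def by auto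

lemma ideal_diff: "is_ideal I \<Longrightarrow> a \<in> I \<Longrightarrow> b \<in> I \<Longrightarrow> a - b \<in> I"
  using ideal_add[of I a "- b"] ideal_mult_left[of I b "- 1"] by simp

lemma ideal_sum_list: "is_ideal I \<Longrightarrow> set xs \<subseteq> I \<Longrightarrow> sum_list xs \<in> I"
  by (induction xs) (simp_all add: ideal_0 ideal_add)

lemma is_ideal_UNIV: "is_ideal UNIV"
  unfolding is_ideal_def by auto

lemma is_ideal_ideal_mult: "is_ideal (ideal_mult I J)"
  unfolding ideal_mult_def by (rule is_ideal_ideal_gen)

lemma mult_mem_ideal_mult: "a \<in> I \<Longrightarrow> b \<in> J \<Longrightarrow> a * b \<in> ideal_mult I J"
  unfolding ideal_mult_def by (rule subsetD[OF ideal_gen_subset]) blast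

lemma ideal_mult_commute: "ideal_mult I J = ideal_mult J I"
  unfolding ideal_mult_def by (metis (no_types, opaque_lifting) mult.commute)

lemma ideal_mult_subset_right: "is_ideal J \<Longrightarrow> ideal_mult I J \<subseteq> J"
  unfolding ideal_mult_def by (rule ideal_gen_minimal) (auto simp: ideal_mult_left)

lemma ideal_mult_subset_left: "is_ideal I \<Longrightarrow> ideal_mult I J \<subseteq> I"
  using ideal_mult_subset_right[of I J] by (simp add: ideal_mult_commute)

lemma ideal_mult_UNIV_left: "is_ideal J \<Longrightarrow> ideal_mult UNIV J = J"
  using ideal_mult_subset_right[of J UNIV] mult_mem_ideal_mult[of 1 UNIV _ J] by fastforce

lemma is_ideal_sums_of_products:
  assumes "is_ideal I"
  shows "is_ideal {\<Sum>(a, b)\<leftarrow>ps. a * b | ps. set ps \<subseteq> I \<times> J}"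
  unfolding is_ideal_def
proof (intro conjI ballI allI)
  show "0 \<in> {\<Sum>(a, b)\<leftarrow>ps. a * b | ps. set ps \<subseteq> I \<times> J}"
    by (auto intro!: exI[of _ "[]"])
next
  fix u v assume "u \<in> {\<Sum>(a, b)\<leftarrow>ps. a * b | ps. set ps \<subseteq> I \<times> J}"
    and "v \<in> {\<Sum>(a, b)\<leftarrow>ps. a * b | ps. set ps \<subseteq> I \<times> J}"
  then obtain ps qs where "set ps \<subseteq> I \<times> J" "u = (\<Sum>(a, b)\<leftarrow>ps. a * b)"
    and "set qs \<subseteq> I \<times> J" "v = (\<Sum>(a, b)\<leftarrow>qs. a * b)"
    by blast
  then show "u + v \<in> {\<Sum>(a, b)\<leftarrow>ps. a * b | ps. set ps \<subseteq> I \<times> J}"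
    by (intro CollectI exI[of _ "ps @ qs"]) auto
next
  fix r u assume "u \<in> {\<Sum>(a, b)\<leftarrow>ps. a * b | ps. set ps \<subseteq> I \<times> J}"
  then obtain ps where ps: "set ps \<subseteq> I \<times> J" "u = (\<Sum>(a, b)\<leftarrow>ps. a * b)"
    by blast
  let ?qs = "map (\<lambda>(a, b). (r * a, b)) ps"
  have "set ?qs \<subseteq> I \<times> J"
    using ps(1) ideal_mult_left[OF assms] by auto
  moreover have "r * u = (\<Sum>(a, b)\<leftarrow>?qs. a * b)"
    unfolding ps(2) by (induction ps) (auto simp: algebra_simps)
  ultimately show "r * u \<in> {\<Sum>(a, b)\<leftarrow>ps. a * b | ps. set ps \<subseteq> I \<times> J}"
    by blast
qed

lemma mem_ideal_multE:
  assumes "is_ideal I" "z \<in> ideal_mult I J"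
  obtains ps where "set ps \<subseteq> I \<times> J" "z = (\<Sum>(a, b)\<leftarrow>ps. a * b)"
proof -
  have "ideal_mult I J \<subseteq> {\<Sum>(a, b)\<leftarrow>ps. a * b | ps. set ps \<subseteq> I \<times> J}"
    unfolding ideal_mult_def
  proof (rule ideal_gen_minimal[OF is_ideal_sums_of_products[OF assms(1)]], safe)
    fix a b assume "a \<in> I" "b \<in> J"
    then show "\<exists>ps. a * b = (\<Sum>(a, b)\<leftarrow>ps. a * b) \<and> set ps \<subseteq> I \<times> J"
      by (intro exI[of _ "[(a, b)]"]) auto
  qed
  then show ?thesis
    using assms(2) that by blast
qed

lemma ideal_mult_assoc_subset:
  assumes "is_ideal A"
  shows "ideal_mult (ideal_mult A B) C \<subseteq> ideal_mult A (ideal_mult B C)"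
  unfolding ideal_mult_def[of "ideal_mult A B"]
proof (rule ideal_gen_minimal[OF is_ideal_ideal_mult], safe)
  fix z c assume z: "z \<in> ideal_mult A B" and c: "c \<in> C"
  obtain ps where ps: "set ps \<subseteq> A \<times> B" "z = (\<Sum>(a, b)\<leftarrow>ps. a * b)"
    using mem_ideal_multE[OF assms z] .
  have "z * c = (\<Sum>(a, b)\<leftarrow>ps. a * (b * c))"
    unfolding ps(2) by (induction ps) (auto simp: algebra_simps)
  also have "\<dots> \<in> ideal_mult A (ideal_mult B C)"
    using ps(1) c
    by (intro ideal_sum_list[OF is_ideal_ideal_mult]) (auto intro!: mult_mem_ideal_mult)
  finally show "z * c \<in> ideal_mult A (ideal_mult B C)" .
qed

lemma ideal_mult_assoc:
  assumes "is_ideal A" "is_ideal B" "is_ideal C"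
  shows "ideal_mult (ideal_mult A B) C = ideal_mult A (ideal_mult B C)"
proof
  show "ideal_mult (ideal_mult A B) C \<subseteq> ideal_mult A (ideal_mult B C)"
    using assms(1) by (rule ideal_mult_assoc_subset)
  have "ideal_mult A (ideal_mult B C) = ideal_mult (ideal_mult B C) A"
    by (rule ideal_mult_commute)
  also have "\<dots> \<subseteq> ideal_mult B (ideal_mult C A)"
    using assms(2) by (rule ideal_mult_assoc_subset)
  also have "\<dots> = ideal_mult (ideal_mult C A) B"
    by (rule ideal_mult_commute)
  also have "\<dots> \<subseteq> ideal_mult C (ideal_mult A B)"
    using assms(3) by (rule ideal_mult_assoc_subset)
  also have "\<dots> = ideal_mult (ideal_mult A B) C"
    by (rule ideal_mult_commute)
  finally show "ideal_mult A (ideal_mult B C) \<subseteq> ideal_mult (ideal_mult A B) C" .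
qed

lemma is_ideal_ideal_prod: "is_ideal (ideal_prod xs)"
  by (cases xs) (simp_all add: ideal_prod_def is_ideal_UNIV is_ideal_ideal_mult)

lemma ideal_prod_append:
  assumes "\<forall>J\<in>set xs. is_ideal J"
  shows "ideal_prod (xs @ ys) = ideal_mult (ideal_prod xs) (ideal_prod ys)"
  using assms
proof (induction xs)
  case Nil
  then show ?case
    using ideal_mult_UNIV_left[OF is_ideal_ideal_prod, of ys] by (simp add: ideal_prod_def)
next
  case (Cons J xs)
  then show ?case
    by (simp add: ideal_prod_def ideal_mult_assoc is_ideal_ideal_prod[unfolded ideal_prod_def])
qed

text \<open>A proper factor \<open>J\<close> with \<open>I = J I\<close> would give factorizations of \<open>I\<close> into atoms of
  unbounded length: those of \<open>I\<close> preceded by arbitrarily many copies of one of \<open>J\<close>.\<close>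

lemma ideals_BF_mult_eq_imp_UNIV:
  fixes I J :: "'r::comm_ring_1 set"
  assumes BF: "ideals_BF TYPE('r)"
    and I: "I \<in> nz_ideals" "I \<noteq> UNIV" and J: "J \<in> nz_ideals"
    and eq: "I = ideal_mult J I"
  shows "J = UNIV"
proof (rule ccontr)
  assume "J \<noteq> UNIV"
  with BF J obtain xs where xs: "\<forall>K\<in>set xs. ideal_atom K" "ideal_prod xs = J"
    unfolding ideals_BF_def ideal_lengths_def by blast
  from BF I obtain ys where ys: "\<forall>K\<in>set ys. ideal_atom K" "ideal_prod ys = I"
    unfolding ideals_BF_def ideal_lengths_def by blast
  have "xs \<noteq> []"
    using xs \<open>J \<noteq> UNIV\<close> by (auto simp: ideal_prod_def)
  have xs_ideals: "\<forall>K\<in>set xs. is_ideal K"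
    using xs(1) by (simp add: ideal_atom_def nz_ideals_def)
  have "ideal_prod (concat (replicate n xs) @ ys) = I" for n
  proof (induction n)
    case (Suc n)
    then show ?case
      using ideal_prod_append[OF xs_ideals, of "concat (replicate n xs) @ ys"] xs(2) eq by simp
  qed (simp add: ys)
  then have "length (concat (replicate n xs) @ ys) \<in> ideal_lengths I" for n
    using xs(1) ys(1) unfolding ideal_lengths_def by (intro CollectI exI[of _ "concat (replicate n xs) @ ys"]) auto
  moreover have "n \<le> length (concat (replicate n xs) @ ys)" for n
    using \<open>xs \<noteq> []\<close> by (simp add: length_concat sum_list_replicate trans_le_add1 Suc_leI)
  ultimately have "infinite (ideal_lengths I)"
    unfolding infinite_nat_iff_unbounded_le by blast
  then show False
    using BF I unfolding ideals_BF_def by blast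
qed

section \<open>The substitution \<open>X\<^sub>i \<mapsto> s\<close>, \<open>Y \<mapsto> s t\<close>\<close>

definition total_degree :: "('n::finite \<Rightarrow>\<^sub>0 nat) \<Rightarrow> nat" where
  "total_degree \<mu> = (\<Sum>i\<in>UNIV. Poly_Mapping.lookup \<mu> i)"

lemma total_degree_add: "total_degree (\<mu> + \<nu>) = total_degree \<mu> + total_degree \<nu>"
  unfolding total_degree_def by (simp add: lookup_add sum.distrib)

lemma total_degree_eq_0_iff: "total_degree \<mu> = 0 \<longleftrightarrow> \<mu> = 0"
  unfolding total_degree_def by (auto intro: poly_mapping_eqI)

lemma total_degree_single: "total_degree (Poly_Mapping.single x a) = a"
  unfolding total_degree_def by (simp add: lookup_single when_def)

lemma lookup_le_total_degree: "Poly_Mapping.lookup \<mu> i \<le> total_degree \<mu>"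
  unfolding total_degree_def by (rule member_le_sum) auto

text \<open>\<open>subst_st y f\<close> is \<open>f\<close> with every variable replaced by \<open>s\<close> except \<open>X\<^sub>y\<close>, which becomes
  \<open>s t\<close>; it lives in \<open>D[t][s]\<close>, so the outer coefficients are indexed by total degree and the
  inner ones by the degree in \<open>X\<^sub>y\<close>.\<close>

definition st_monom :: "'n \<Rightarrow> ('n::finite \<Rightarrow>\<^sub>0 nat) \<Rightarrow> 'a::comm_ring_1 \<Rightarrow> 'a poly poly" where
  "st_monom y \<mu> c = monom (monom c (Poly_Mapping.lookup \<mu> y)) (total_degree \<mu>)"

definition subst_st :: "'n \<Rightarrow> ('n::finite, 'a::comm_ring_1) mpoly \<Rightarrow> 'a poly poly" where
  "subst_st y f = (\<Sum>\<mu>\<in>Poly_Mapping.keys f. st_monom y \<mu> (Poly_Mapping.lookup f \<mu>))"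

lemma st_monom_0 [simp]: "st_monom y \<mu> 0 = 0"
  by (simp add: st_monom_def)

lemma st_monom_add: "st_monom y \<mu> (a + b) = st_monom y \<mu> a + st_monom y \<mu> b"
  by (simp add: st_monom_def add_monom)

lemma st_monom_mult: "st_monom y \<mu> a * st_monom y \<nu> b = st_monom y (\<mu> + \<nu>) (a * b)"
  by (simp add: st_monom_def mult_monom lookup_add total_degree_add)

lemma subst_st_0 [simp]: "subst_st y 0 = 0"
  by (simp add: subst_st_def)

lemma subst_st_add: "subst_st y (f + g) = subst_st y f + subst_st y g"
  unfolding subst_st_def by (rule setsum_keys_plus_distrib) (simp_all add: st_monom_add)

lemma subst_st_single: "subst_st y (Poly_Mapping.single \<mu> c) = st_monom y \<mu> c"
  by (cases "c = 0") (simp_all add: subst_st_def)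

lemma update_eq_add_single:
  "a \<notin> Poly_Mapping.keys f \<Longrightarrow> Poly_Mapping.update a b f = f + Poly_Mapping.single a b"
  by (rule poly_mapping_eqI) (auto simp: lookup_update lookup_add lookup_single in_keys_iff)

lemma subst_st_single_mult:
  "subst_st y (Poly_Mapping.single \<mu> c * g) = st_monom y \<mu> c * subst_st y g"
proof (induction g rule: Poly_Mapping.update_induct)
  case (update a b g)
  then show ?case
    by (simp add: update_eq_add_single distrib_left subst_st_add mult_single subst_st_single
        st_monom_mult)
qed simp

lemma subst_st_mult: "subst_st y (f * g) = subst_st y f * subst_st y g"
proof (induction f rule: Poly_Mapping.update_induct)
  case (update a b f)
  then show ?case
    by (simp add: update_eq_add_single distrib_right subst_st_add subst_st_single_mult
        subst_st_single)
qed simp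

lemma subst_st_const_mult:
  "subst_st y (Poly_Mapping.single 0 c * f) = [:[:c:]:] * subst_st y f"
  by (simp add: subst_st_single_mult st_monom_def total_degree_def monom_0)

lemma subst_st_monXY:
  "x \<noteq> y \<Longrightarrow> subst_st y (monXY x y i j :: ('n::finite, 'a::comm_ring_1) mpoly) = monom (monom 1 j) (i + j)"
  by (simp add: monXY_def subst_st_single st_monom_def lookup_add lookup_single total_degree_add
      total_degree_single)

lemma coeff_subst_st:
  "coeff (subst_st y f) k = (\<Sum>\<mu>\<in>{\<mu>\<in>Poly_Mapping.keys f. total_degree \<mu> = k}.
      monom (Poly_Mapping.lookup f \<mu>) (Poly_Mapping.lookup \<mu> y))"
  unfolding subst_st_def coeff_sum st_monom_def coeff_monom
  by (rule sum.mono_neutral_cong_right) auto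

lemma coeff_coeff_subst_st:
  "coeff (coeff (subst_st y f) k) j = (\<Sum>\<mu>\<in>{\<mu>\<in>Poly_Mapping.keys f.
      total_degree \<mu> = k \<and> Poly_Mapping.lookup \<mu> y = j}. Poly_Mapping.lookup f \<mu>)"
  unfolding coeff_subst_st coeff_sum coeff_monom
  by (rule sum.mono_neutral_cong_right) auto

lemma degree_coeff_subst_st_le: "degree (coeff (subst_st y f) k) \<le> k"
proof -
  have "degree (coeff (subst_st y f) k) \<le> Max (insert 0 ((\<lambda>\<mu>. degree (monom (Poly_Mapping.lookup f \<mu>)
     (Poly_Mapping.lookup \<mu> y))) ` {\<mu>\<in>Poly_Mapping.keys f. total_degree \<mu> = k}))"
    unfolding coeff_subst_st by (rule degree_sum_le) auto
  also have "\<dots> \<le> k"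
    by (intro Max.boundedI) (auto intro: order.trans[OF degree_monom_le] simp: lookup_le_total_degree)
  finally show ?thesis .
qed

lemma coeff_subst_st_0: "coeff (subst_st y f) 0 = [:Poly_Mapping.lookup f 0:]"
proof -
  have "{\<mu>\<in>Poly_Mapping.keys f. total_degree \<mu> = 0} = (if Poly_Mapping.lookup f 0 = 0 then {} else {0})"
    by (auto simp: total_degree_eq_0_iff in_keys_iff)
  then show ?thesis
    unfolding coeff_subst_st by (auto simp: monom_0)
qed

section \<open>Monomial ideals\<close>

lemma is_ideal_keys_subset:
  assumes "\<And>\<mu> \<nu>. \<mu> \<in> U \<Longrightarrow> \<nu> + \<mu> \<in> U"
  shows "is_ideal {f :: ('n, 'a::comm_ring_1) mpoly. Poly_Mapping.keys f \<subseteq> U}"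
  unfolding is_ideal_def
proof (intro conjI ballI allI)
  fix a b :: "('n, 'a) mpoly"
  assume "a \<in> {f. Poly_Mapping.keys f \<subseteq> U}" "b \<in> {f. Poly_Mapping.keys f \<subseteq> U}"
  then show "a + b \<in> {f. Poly_Mapping.keys f \<subseteq> U}"
    using keys_add[of a b] by auto
next
  fix r a :: "('n, 'a) mpoly"
  assume "a \<in> {f. Poly_Mapping.keys f \<subseteq> U}"
  then show "r * a \<in> {f. Poly_Mapping.keys f \<subseteq> U}"
    using keys_mult[of r a] assms by blast
qed simp

lemma lookup_mult_least_total_degree:
  fixes f g :: "('n::finite, 'a::comm_ring_1) mpoly"
  assumes least: "\<And>\<nu>. \<nu> \<in> Poly_Mapping.keys g \<Longrightarrow> total_degree \<mu> \<le> total_degree \<nu>"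
  shows "Poly_Mapping.lookup (f * g) \<mu> = Poly_Mapping.lookup f 0 * Poly_Mapping.lookup g \<mu>"
proof -
  define f' where "f' = f - Poly_Mapping.single 0 (Poly_Mapping.lookup f 0)"
  have "\<mu> \<notin> Poly_Mapping.keys (f' * g)"
  proof
    assume "\<mu> \<in> Poly_Mapping.keys (f' * g)"
    then obtain a b where "a \<in> Poly_Mapping.keys f'" "b \<in> Poly_Mapping.keys g" "\<mu> = a + b"
      using keys_mult[of f' g] by blast
    moreover have "a \<noteq> 0"
      using \<open>a \<in> Poly_Mapping.keys f'\<close> by (auto simp: f'_def in_keys_iff lookup_minus)
    ultimately show False
      using least[of b] total_degree_eq_0_iff[of a] by (simp add: total_degree_add)
  qed
  moreover have "f * g = Poly_Mapping.single 0 (Poly_Mapping.lookup f 0) * g + f' * g"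
    by (simp add: f'_def algebra_simps)
  ultimately show ?thesis
    by (simp add: lookup_add in_keys_iff Poly_Mapping.map.rep_eq when_def flip: mult_map_scale_conv_mult)
qed

text \<open>Split \<open>g\<close> into its terms inside and outside \<open>U\<close>; a term of least total degree outside \<open>U\<close>
  survives in \<open>f g\<close>.\<close>

lemma keys_mult_subset_cancel:
  fixes f g :: "('n::finite, 'a::idom) mpoly"
  assumes up: "\<And>\<mu> \<nu>. \<mu> \<in> U \<Longrightarrow> \<nu> + \<mu> \<in> U"
    and fg: "Poly_Mapping.keys (f * g) \<subseteq> U" and f0: "Poly_Mapping.lookup f 0 \<noteq> 0"
  shows "Poly_Mapping.keys g \<subseteq> U"
proof (rule ccontr)
  assume "\<not> Poly_Mapping.keys g \<subseteq> U"
  let ?M = "{f :: ('n, 'a) mpoly. Poly_Mapping.keys f \<subseteq> U}"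
  have M: "is_ideal ?M"
    using up by (rule is_ideal_keys_subset)
  define g1 where "g1 = Poly_Mapping.mapp (\<lambda>\<mu> c. c when \<mu> \<in> U) g"
  define g2 where "g2 = g - g1"
  have lookup_g2: "Poly_Mapping.lookup g2 \<mu> = (Poly_Mapping.lookup g \<mu> when \<mu> \<notin> U)" for \<mu>
    by (simp add: g1_def g2_def lookup_minus lookup_mapp in_keys_iff when_def)
  have "g1 \<in> ?M"
    by (auto simp: g1_def in_keys_iff lookup_mapp when_def split: if_splits)
  then have "f * g - f * g1 \<in> ?M"
    using fg ideal_diff[OF M, of "f * g"] ideal_mult_left[OF M] by simp
  then have fg2: "Poly_Mapping.keys (f * g2) \<subseteq> U"
    by (simp add: g2_def right_diff_distrib)
  obtain k where "k \<in> Poly_Mapping.keys g2"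
    using \<open>\<not> Poly_Mapping.keys g \<subseteq> U\<close> by (auto simp: in_keys_iff lookup_g2)
  then obtain \<mu> where \<mu>: "\<mu> \<in> Poly_Mapping.keys g2"
    and least: "\<And>\<nu>. \<nu> \<in> Poly_Mapping.keys g2 \<Longrightarrow> total_degree \<mu> \<le> total_degree \<nu>"
    using ex_has_least_nat[of "\<lambda>\<mu>. \<mu> \<in> Poly_Mapping.keys g2" k total_degree] by blast
  from least have "Poly_Mapping.lookup (f * g2) \<mu> = Poly_Mapping.lookup f 0 * Poly_Mapping.lookup g2 \<mu>"
    by (rule lookup_mult_least_total_degree)
  then have "\<mu> \<in> Poly_Mapping.keys (f * g2)"
    using f0 \<mu> by (simp add: in_keys_iff)
  moreover have "\<mu> \<notin> U"
    using \<mu> by (simp add: in_keys_iff lookup_g2 when_def split: if_splits)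
  ultimately show False
    using fg2 by blast
qed

lemma monomial_ideal_factor_eq:
  fixes f0 :: "('n::finite, 'a::idom) mpoly"
  assumes up: "\<And>\<mu> \<nu>. \<mu> \<in> U \<Longrightarrow> \<nu> + \<mu> \<in> U"
    and eq: "{f. Poly_Mapping.keys f \<subseteq> U} = ideal_mult J K" and K: "is_ideal K"
    and f0: "f0 \<in> J" "Poly_Mapping.lookup f0 0 \<noteq> 0"
  shows "K = {f. Poly_Mapping.keys f \<subseteq> U}"
proof
  show "{f. Poly_Mapping.keys f \<subseteq> U} \<subseteq> K"
    using eq ideal_mult_subset_right[OF K] by simp
  show "K \<subseteq> {f. Poly_Mapping.keys f \<subseteq> U}"
  proof
    fix g assume "g \<in> K"
    then have "f0 * g \<in> {f. Poly_Mapping.keys f \<subseteq> U}"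
      using eq mult_mem_ideal_mult[OF f0(1)] by blast
    then show "g \<in> {f. Poly_Mapping.keys f \<subseteq> U}"
      using keys_mult_subset_cancel[OF up _ f0(2)] by blast
  qed
qed

definition I_B_exponents :: "'n \<Rightarrow> 'n \<Rightarrow> nat set \<Rightarrow> ('n \<Rightarrow>\<^sub>0 nat) set" where
  "I_B_exponents x y B =
     {Poly_Mapping.single x (Max B - n) + Poly_Mapping.single y n + \<nu> | n \<nu>. n \<in> B}"

lemma I_B_exponents_add:
  assumes "\<mu> \<in> I_B_exponents x y B"
  shows "\<nu> + \<mu> \<in> I_B_exponents x y B"
proof -
  obtain n \<nu>' where "n \<in> B" "\<mu> = Poly_Mapping.single x (Max B - n) + Poly_Mapping.single y n + \<nu>'"
    using assms by (auto simp: I_B_exponents_def)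
  then show ?thesis
    unfolding I_B_exponents_def by (intro CollectI exI[of _ n] exI[of _ "\<nu> + \<nu>'"]) (simp add: add_ac)
qed

lemma monXY_mem_I_B: "n \<in> B \<Longrightarrow> monXY x y (Max B - n) n \<in> I_B x y B"
  unfolding I_B_def by (rule subsetD[OF ideal_gen_subset]) blast

lemma I_B_eq: "(I_B x y B :: ('n, 'a::comm_ring_1) mpoly set) =
    {f. Poly_Mapping.keys f \<subseteq> I_B_exponents x y B}"
proof
  show "(I_B x y B :: ('n, 'a) mpoly set) \<subseteq> {f. Poly_Mapping.keys f \<subseteq> I_B_exponents x y B}"
    unfolding I_B_def
  proof (rule ideal_gen_minimal[OF is_ideal_keys_subset[OF I_B_exponents_add]], safe)
    fix n \<mu> assume "n \<in> B" "\<mu> \<in> Poly_Mapping.keys (monXY x y (Max B - n) n :: ('n, 'a) mpoly)"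
    then have "\<mu> = Poly_Mapping.single x (Max B - n) + Poly_Mapping.single y n + 0"
      by (simp add: monXY_def)
    with \<open>n \<in> B\<close> show "\<mu> \<in> I_B_exponents x y B"
      unfolding I_B_exponents_def by blast
  qed
  show "{f. Poly_Mapping.keys f \<subseteq> I_B_exponents x y B} \<subseteq> (I_B x y B :: ('n, 'a) mpoly set)"
  proof safe
    fix f :: "('n, 'a) mpoly" assume "Poly_Mapping.keys f \<subseteq> I_B_exponents x y B"
    then show "f \<in> I_B x y B"
    proof (induction f rule: Poly_Mapping.update_induct)
      case const
      show ?case
        unfolding I_B_def by (rule ideal_0[OF is_ideal_ideal_gen])
    next
      case (update f \<mu> c)
      have I: "is_ideal (I_B x y B :: ('n, 'a) mpoly set)"
        unfolding I_B_def by (rule is_ideal_ideal_gen)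
      from update.prems update.hyps obtain n \<nu> where "n \<in> B"
        and \<mu>: "\<mu> = Poly_Mapping.single x (Max B - n) + Poly_Mapping.single y n + \<nu>"
        by (auto simp: keys_update I_B_exponents_def)
      then have "Poly_Mapping.single \<mu> c = Poly_Mapping.single \<nu> c * monXY x y (Max B - n) n"
        by (simp add: monXY_def mult_single add_ac)
      also have "\<dots> \<in> I_B x y B"
        using \<open>n \<in> B\<close> by (intro ideal_mult_left[OF I] monXY_mem_I_B)
      finally have "Poly_Mapping.single \<mu> c \<in> I_B x y B" .
      moreover have "f \<in> I_B x y B"
        using update.prems update.hyps(2) by (intro update.IH) (simp add: keys_update)
      ultimately show ?case
        by (simp add: update_eq_add_single[OF update.hyps(1)] ideal_add[OF I])
    qed
  qed
qed

lemma Max_le_total_degree_I_B_exponent: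
  assumes "finite B" "\<mu> \<in> I_B_exponents x y B"
  shows "Max B \<le> total_degree (\<mu> :: 'n::finite \<Rightarrow>\<^sub>0 nat)"
  using assms by (auto simp: I_B_exponents_def total_degree_add total_degree_single)

lemma lookup_I_B_exponent_mem:
  assumes "finite B" "x \<noteq> y" "\<mu> \<in> I_B_exponents x y B"
    and "total_degree (\<mu> :: 'n::finite \<Rightarrow>\<^sub>0 nat) = Max B"
  shows "Poly_Mapping.lookup \<mu> y \<in> B"
proof -
  obtain n \<nu> where "n \<in> B" and \<mu>: "\<mu> = Poly_Mapping.single x (Max B - n) + Poly_Mapping.single y n + \<nu>"
    using assms(3) by (auto simp: I_B_exponents_def)
  then have "total_degree \<nu> = 0"
    using assms(1,4) by (simp add: total_degree_add total_degree_single)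
  then show ?thesis
    using \<open>n \<in> B\<close> \<mu> assms(2) by (simp add: total_degree_eq_0_iff lookup_add lookup_single)
qed

lemma coeff_subst_st_I_B_less:
  assumes "finite B" "f \<in> (I_B x y B :: ('n::finite, 'a::comm_ring_1) mpoly set)" "k < Max B"
  shows "coeff (subst_st y f) k = 0"
proof -
  have empty: "{\<mu>\<in>Poly_Mapping.keys f. total_degree \<mu> = k} = {}"
    using assms Max_le_total_degree_I_B_exponent[OF assms(1)] by (force simp: I_B_eq)
  show ?thesis
    unfolding coeff_subst_st empty by simp
qed

lemma coeff_coeff_subst_st_I_B_Max:
  assumes "finite B" "x \<noteq> y" "f \<in> (I_B x y B :: ('n::finite, 'a::comm_ring_1) mpoly set)"
    and "coeff (coeff (subst_st y f) (Max B)) j \<noteq> 0"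
  shows "j \<in> B"
proof -
  from assms(4) obtain \<mu> where "\<mu> \<in> Poly_Mapping.keys f" "total_degree \<mu> = Max B"
    "Poly_Mapping.lookup \<mu> y = j"
    unfolding coeff_coeff_subst_st by (metis (mono_tags, lifting) mem_Collect_eq sum.neutral)
  then show ?thesis
    using assms(3) lookup_I_B_exponent_mem[OF assms(1,2)] by (auto simp: I_B_eq)
qed

lemma I_B_nz_ideal_not_UNIV:
  assumes "finite B" "0 \<in> B" "0 < Max B"
  shows "(I_B x y B :: ('n::finite, 'a::comm_ring_1) mpoly set) \<in> nz_ideals"
    and "(I_B x y B :: ('n, 'a) mpoly set) \<noteq> UNIV"
proof -
  have "monXY x y (Max B) 0 \<in> (I_B x y B :: ('n, 'a) mpoly set)"
    using monXY_mem_I_B[OF assms(2), of x y] by simp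
  moreover have "(monXY x y (Max B) 0 :: ('n, 'a) mpoly) \<noteq> 0"
    by (metis lookup_single_eq lookup_zero monXY_def zero_neq_one)
  ultimately show "(I_B x y B :: ('n, 'a) mpoly set) \<in> nz_ideals"
    unfolding nz_ideals_def I_B_def using is_ideal_ideal_gen by blast
  have "(0 :: 'n \<Rightarrow>\<^sub>0 nat) \<notin> I_B_exponents x y B"
    using Max_le_total_degree_I_B_exponent[OF assms(1)] assms(3) by (force simp: total_degree_def)
  then have "(1 :: ('n, 'a) mpoly) \<notin> I_B x y B"
    by (simp add: I_B_eq)
  then show "(I_B x y B :: ('n, 'a) mpoly set) \<noteq> UNIV"
    by blast
qed

section \<open>Univariate polynomials\<close>

lemma coeff_mult_at_orders:
  fixes p q :: "'a::comm_semiring_0 poly"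
  assumes "\<forall>k<a. coeff p k = 0" "\<forall>k<b. coeff q k = 0"
  shows "coeff (p * q) (a + b) = coeff p a * coeff q b"
proof -
  have "coeff (p * q) (a + b) = (\<Sum>i\<le>a + b. if i = a then coeff p a * coeff q b else 0)"
    unfolding coeff_mult
  proof (intro sum.cong refl)
    fix i assume "i \<in> {..a + b}"
    then show "coeff p i * coeff q (a + b - i) = (if i = a then coeff p a * coeff q b else 0)"
      using assms by (cases i a rule: linorder_cases) auto
  qed
  then show ?thesis
    by simp
qed

lemma coeff_mult_below_orders:
  fixes p q :: "'a::comm_semiring_0 poly"
  assumes "\<forall>k<a. coeff p k = 0" "\<forall>k<b. coeff q k = 0" "n < a + b"
  shows "coeff (p * q) n = 0"
  unfolding coeff_mult
proof (intro sum.neutral ballI)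
  fix i assume "i \<in> {..n}"
  then show "coeff p i * coeff q (n - i) = 0"
    using assms by (cases "i < a") auto
qed

lemma coeff_mult_at_degree_bounds:
  fixes p q :: "'a::comm_semiring_0 poly"
  assumes "degree p \<le> a" "degree q \<le> b"
  shows "coeff (p * q) (a + b) = coeff p a * coeff q b"
proof -
  have "coeff (p * q) (a + b) = (\<Sum>i\<le>a + b. if i = a then coeff p a * coeff q b else 0)"
    unfolding coeff_mult
  proof (intro sum.cong refl)
    fix i assume "i \<in> {..a + b}"
    then show "coeff p i * coeff q (a + b - i) = (if i = a then coeff p a * coeff q b else 0)"
      using assms by (cases i a rule: linorder_cases) (auto simp: coeff_eq_0)
  qed
  then show ?thesis
    by simp
qed

lemma ex_coeff_mult_nonzero:
  assumes "coeff (\<Sum>(P, Q)\<leftarrow>ps. P * Q) n \<noteq> 0"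
  shows "\<exists>(P, Q)\<in>set ps. coeff (P * Q) n \<noteq> (0 :: 'a::comm_semiring_0)"
  using assms by (induction ps) auto

interpretation poly_smult: module "smult :: 'a::comm_ring_1 \<Rightarrow> 'a poly \<Rightarrow> 'a poly"
  by standard (simp_all add: smult_add_right smult_add_left)

text \<open>Fix \<open>P\<^sub>1 \<in> V\<close> with \<open>c = P\<^sub>1(0) \<noteq> 0\<close>. For \<open>P \<in> V\<close> the element \<open>c P - P(0) P\<^sub>1\<close> of \<open>V\<close> has zero
  constant term, hence vanishes; multiplying \<open>\<Sum> P\<^sub>i Q\<^sub>i = 1\<close> by \<open>c\<close> shows that \<open>P\<^sub>1\<close> divides \<open>c\<close>.\<close>

lemma subspace_constant_term_imp_constant:
  fixes V :: "'a::idom poly set"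
  assumes V: "poly_smult.subspace V" and V0: "\<And>P. P \<in> V \<Longrightarrow> P \<noteq> 0 \<Longrightarrow> coeff P 0 \<noteq> 0"
    and ps: "fst ` set ps \<subseteq> V" "(\<Sum>(P, Q)\<leftarrow>ps. P * Q) = 1"
    and "P \<in> V"
  shows "degree P = 0"
proof -
  obtain P1 Q1 where "(P1, Q1) \<in> set ps" "coeff (P1 * Q1) 0 \<noteq> 0"
    using ex_coeff_mult_nonzero[of ps 0] ps(2) by auto
  then have P1: "P1 \<in> V" "coeff P1 0 \<noteq> 0"
    using ps(1) by (force simp: coeff_mult_0)+
  define c where "c = coeff P1 0"
  have scale: "smult c P = smult (coeff P 0) P1" if "P \<in> V" for P
  proof -
    have "smult c P - smult (coeff P 0) P1 \<in> V"
      using V that P1(1) by (intro poly_smult.subspace_diff poly_smult.subspace_scale)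
    moreover have "coeff (smult c P - smult (coeff P 0) P1) 0 = 0"
      by (simp add: c_def mult.commute)
    ultimately show ?thesis
      using V0 by fastforce
  qed
  have "fst ` set qs \<subseteq> V \<Longrightarrow>
      smult c (\<Sum>(P, Q)\<leftarrow>qs. P * Q) = P1 * (\<Sum>(P, Q)\<leftarrow>qs. smult (coeff P 0) Q)" for qs
  proof (induction qs)
    case (Cons PQ qs)
    obtain P Q where PQ: "PQ = (P, Q)" by fastforce
    then have "smult c (P * Q) = P1 * smult (coeff P 0) Q"
      using Cons.prems scale[of P] by (simp flip: mult_smult_left)
    then show ?case
      using Cons PQ by (simp add: smult_add_right distrib_left)
  qed simp
  from this[OF ps(1)] have "[:c:] = P1 * (\<Sum>(P, Q)\<leftarrow>ps. smult (coeff P 0) Q)"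
    using ps(2) by simp
  moreover have "c \<noteq> 0"
    using P1(2) by (simp add: c_def)
  ultimately have "degree P1 = 0"
    by (metis add_is_0 degree_mult_eq degree_pCons_0 mult_zero_right pCons_eq_0_iff)
  then have "degree (smult c P) = 0"
    using scale[OF \<open>P \<in> V\<close>] by simp
  then show ?thesis
    using \<open>c \<noteq> 0\<close> by simp
qed

text \<open>The lowest nonzero coefficients of \<open>P \<in> V\<close>, \<open>Q \<in> W\<close> sit at positions \<open>i, j\<close> with
  \<open>i, j, i + j \<in> {0} \<union> A\<close> (multiply by \<open>Q\<^sub>1\<close>, \<open>P\<^sub>1\<close> and by each other), so sum-freeness forbids
  \<open>i, j > 0\<close>.\<close>

lemma sum_free_support_imp_constant_terms:
  fixes V W :: "'a::idom poly set"
  assumes "sum_free A"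
    and supp: "\<And>P Q k. P \<in> V \<Longrightarrow> Q \<in> W \<Longrightarrow> coeff (P * Q) k \<noteq> 0 \<Longrightarrow> k \<in> insert 0 A"
    and P1: "P1 \<in> V" "coeff P1 0 \<noteq> 0" and Q1: "Q1 \<in> W" "coeff Q1 0 \<noteq> 0"
  shows "(\<forall>P\<in>V. P \<noteq> 0 \<longrightarrow> coeff P 0 \<noteq> 0) \<or> (\<forall>Q\<in>W. Q \<noteq> 0 \<longrightarrow> coeff Q 0 \<noteq> 0)"
proof (rule ccontr)
  define ord where "ord P = subdegree (fps_of_poly P)" for P :: "'a poly"
  have coeff_ord: "coeff P (ord P) \<noteq> 0" if "P \<noteq> 0" for P
    using that nth_subdegree_nonzero[of "fps_of_poly P"]
    by (simp add: ord_def fps_of_poly_eq_iff[of P 0, simplified])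
  have ord_0_iff: "ord P = 0 \<longleftrightarrow> P = 0 \<or> coeff P 0 \<noteq> 0" for P
    by (simp add: ord_def subdegree_eq_0_iff fps_of_poly_eq_iff[of P 0, simplified])
  have ord_sum: "ord P + ord Q \<in> insert 0 A" if "P \<in> V" "Q \<in> W" "P \<noteq> 0" "Q \<noteq> 0" for P Q
  proof -
    have "coeff (P * Q) (ord P + ord Q) = coeff P (ord P) * coeff Q (ord Q)"
      using nth_subdegree_mult[of "fps_of_poly P" "fps_of_poly Q"]
      by (simp add: ord_def flip: fps_of_poly_mult)
    then show ?thesis
      using supp[OF that(1,2), of "ord P + ord Q"] coeff_ord[OF that(3)] coeff_ord[OF that(4)]
      by simp
  qed
  have P1': "P1 \<noteq> 0" "ord P1 = 0" and Q1': "Q1 \<noteq> 0" "ord Q1 = 0"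
    using P1(2) Q1(2) by (auto simp: ord_0_iff)
  assume "\<not> ?thesis"
  then obtain P Q where PQ: "P \<in> V" "P \<noteq> 0" "ord P \<noteq> 0" "Q \<in> W" "Q \<noteq> 0" "ord Q \<noteq> 0"
    by (auto simp: ord_0_iff)
  then have "ord P \<in> A" "ord Q \<in> A" "ord P + ord Q \<in> A"
    using ord_sum[OF PQ(1,4,2,5)] ord_sum[OF PQ(1) Q1(1) PQ(2) Q1'(1)]
      ord_sum[OF P1(1) PQ(4) P1'(1) PQ(5)] P1'(2) Q1'(2) by auto
  then show False
    using \<open>sum_free A\<close> unfolding sum_free_def by blast
qed

lemma sum_free_support_imp_constant:
  fixes V W :: "'a::idom poly set"
  assumes V: "poly_smult.subspace V" and W: "poly_smult.subspace W" and "sum_free A"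
    and supp: "\<And>P Q k. P \<in> V \<Longrightarrow> Q \<in> W \<Longrightarrow> coeff (P * Q) k \<noteq> 0 \<Longrightarrow> k \<in> insert 0 A"
    and ps: "set ps \<subseteq> V \<times> W" "(\<Sum>(P, Q)\<leftarrow>ps. P * Q) = 1"
  shows "(\<forall>P\<in>V. degree P = 0) \<or> (\<forall>Q\<in>W. degree Q = 0)"
proof -
  obtain P1 Q1 where "(P1, Q1) \<in> set ps" "coeff (P1 * Q1) 0 \<noteq> 0"
    using ex_coeff_mult_nonzero[of ps 0] ps(2) by auto
  then have "P1 \<in> V" "coeff P1 0 \<noteq> 0" "Q1 \<in> W" "coeff Q1 0 \<noteq> 0"
    using ps(1) by (auto simp: coeff_mult_0)
  with \<open>sum_free A\<close> supp
  have "(\<forall>P\<in>V. P \<noteq> 0 \<longrightarrow> coeff P 0 \<noteq> 0) \<or> (\<forall>Q\<in>W. Q \<noteq> 0 \<longrightarrow> coeff Q 0 \<noteq> 0)"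
    by (rule sum_free_support_imp_constant_terms)
  then show ?thesis
  proof
    assume V0: "\<forall>P\<in>V. P \<noteq> 0 \<longrightarrow> coeff P 0 \<noteq> 0"
    have "fst ` set ps \<subseteq> V"
      using ps(1) by auto
    then have "degree P = 0" if "P \<in> V" for P
      using V0 by (intro subspace_constant_term_imp_constant[OF V _ _ ps(2) that]) auto
    then show ?thesis
      by blast
  next
    assume W0: "\<forall>Q\<in>W. Q \<noteq> 0 \<longrightarrow> coeff Q 0 \<noteq> 0"
    have "fst ` set (map prod.swap ps) \<subseteq> W"
      using ps(1) by auto
    moreover have "(\<Sum>(Q, P)\<leftarrow>map prod.swap ps. Q * P) = (\<Sum>(P, Q)\<leftarrow>ps. P * Q)"
      by (induction ps) (auto simp: mult.commute)
    ultimately have "degree Q = 0" if "Q \<in> W" for Q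
      using W0 ps(2)
      by (intro subspace_constant_term_imp_constant[where ps = "map prod.swap ps", OF W _ _ _ that]) auto
    then show ?thesis
      by blast
  qed
qed

section \<open>Factorizations of \<open>I\<^sub>B\<close>\<close>

definition st_order :: "'n \<Rightarrow> ('n::finite, 'a::comm_ring_1) mpoly set \<Rightarrow> nat" where
  "st_order y J = (LEAST k. \<exists>f\<in>J. coeff (subst_st y f) k \<noteq> 0)"

definition initial_forms :: "'n \<Rightarrow> ('n::finite, 'a::comm_ring_1) mpoly set \<Rightarrow> 'a poly set" where
  "initial_forms y J = (\<lambda>f. coeff (subst_st y f) (st_order y J)) ` J"

lemma coeff_subst_st_less_st_order:
  "f \<in> J \<Longrightarrow> k < st_order y J \<Longrightarrow> coeff (subst_st y f) k = 0"
  unfolding st_order_def using not_less_Least by blast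

lemma ex_coeff_subst_st_st_order:
  assumes "f \<in> J" "subst_st y f \<noteq> 0"
  obtains g where "g \<in> J" "coeff (subst_st y g) (st_order y J) \<noteq> 0"
proof -
  have "\<exists>k. \<exists>f\<in>J. coeff (subst_st y f) k \<noteq> 0"
    using assms leading_coeff_neq_0 by blast
  from LeastI_ex[OF this] show ?thesis
    using that unfolding st_order_def by blast
qed

lemma degree_initial_form_le: "P \<in> initial_forms y J \<Longrightarrow> degree P \<le> st_order y J"
  unfolding initial_forms_def using degree_coeff_subst_st_le by blast

lemma subspace_initial_forms:
  assumes "is_ideal J"
  shows "poly_smult.subspace (initial_forms y J)"
proof (rule poly_smult.subspaceI)
  show "0 \<in> initial_forms y J"
    using ideal_0[OF assms] unfolding initial_forms_def by force
next
  fix P Q assume "P \<in> initial_forms y J" "Q \<in> initial_forms y J"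
  then obtain f g where "f \<in> J" "g \<in> J"
    and "P + Q = coeff (subst_st y (f + g)) (st_order y J)"
    unfolding initial_forms_def by (auto simp: subst_st_add)
  then show "P + Q \<in> initial_forms y J"
    unfolding initial_forms_def using ideal_add[OF assms] by blast
next
  fix c P assume "P \<in> initial_forms y J"
  then obtain f where "f \<in> J"
    and "smult c P = coeff (subst_st y (Poly_Mapping.single 0 c * f)) (st_order y J)"
    unfolding initial_forms_def by (auto simp: subst_st_const_mult)
  then show "smult c P \<in> initial_forms y J"
    unfolding initial_forms_def using ideal_mult_left[OF assms] by blast
qed

lemma coeff_subst_st_mult_st_orders:
  assumes "f \<in> J" "g \<in> K"
  shows "coeff (subst_st y (f * g)) (st_order y J + st_order y K) =
    coeff (subst_st y f) (st_order y J) * coeff (subst_st y g) (st_order y K)"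
  unfolding subst_st_mult using assms
  by (intro coeff_mult_at_orders) (auto intro: coeff_subst_st_less_st_order)

lemma coeff_subst_st_mult_below_st_orders:
  assumes "f \<in> J" "g \<in> K" "n < st_order y J + st_order y K"
  shows "coeff (subst_st y (f * g)) n = 0"
  unfolding subst_st_mult using assms
  by (intro coeff_mult_below_orders) (auto intro: coeff_subst_st_less_st_order)

lemma coeff_subst_st_ideal_mult:
  assumes "is_ideal J" "z \<in> ideal_mult J K"
  obtains ps where "set ps \<subseteq> initial_forms y J \<times> initial_forms y K"
    and "coeff (subst_st y z) (st_order y J + st_order y K) = (\<Sum>(P, Q)\<leftarrow>ps. P * Q)"
    and "\<And>n. n < st_order y J + st_order y K \<Longrightarrow> coeff (subst_st y z) n = 0"
proof -
  obtain fgs where fgs: "set fgs \<subseteq> J \<times> K" "z = (\<Sum>(f, g)\<leftarrow>fgs. f * g)"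
    using mem_ideal_multE[OF assms] .
  let ?d = "st_order y J + st_order y K"
  let ?ps = "map (\<lambda>(f, g). (coeff (subst_st y f) (st_order y J), coeff (subst_st y g) (st_order y K))) fgs"
  have "set ?ps \<subseteq> initial_forms y J \<times> initial_forms y K"
    using fgs(1) by (auto simp: initial_forms_def)
  moreover have "coeff (subst_st y z) ?d = (\<Sum>(P, Q)\<leftarrow>?ps. P * Q) \<and>
      (\<forall>n<?d. coeff (subst_st y z) n = 0)"
    unfolding fgs(2) using fgs(1)
    by (induction fgs)
      (auto simp: subst_st_add coeff_subst_st_mult_st_orders coeff_subst_st_mult_below_st_orders)
  ultimately show ?thesis
    using that by blast
qed

lemma subst_st_monXY_Max_0:
  "x \<noteq> y \<Longrightarrow> subst_st y (monXY x y (Max B) 0 :: ('n::finite, 'a::comm_ring_1) mpoly) = monom 1 (Max B)"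
  using subst_st_monXY[of x y "Max B" 0] by (simp add: monom_0 one_pCons)

lemma ex_coeff_subst_st_st_order_I_B:
  assumes "0 \<in> B" "x \<noteq> y" "I_B x y B \<subseteq> (J :: ('n::finite, 'a::comm_ring_1) mpoly set)"
  obtains f where "f \<in> J" "coeff (subst_st y f) (st_order y J) \<noteq> 0"
proof (rule ex_coeff_subst_st_st_order)
  show "monXY x y (Max B) 0 \<in> J"
    using monXY_mem_I_B[OF assms(1), of x y] assms(3) by auto
  show "subst_st y (monXY x y (Max B) 0 :: ('n, 'a) mpoly) \<noteq> 0"
    by (simp add: subst_st_monXY_Max_0[OF assms(2)])
qed

lemma I_B_factor_st_orders:
  fixes J K :: "('n::finite, 'a::idom) mpoly set"
  assumes "finite B" "0 \<in> B" "x \<noteq> y" "is_ideal J" "is_ideal K"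
    and IJK: "I_B x y B = ideal_mult J K"
  shows "st_order y J + st_order y K = Max B"
proof (rule antisym)
  let ?X = "monXY x y (Max B) 0 :: ('n, 'a) mpoly"
  have "?X \<in> I_B x y B"
    using monXY_mem_I_B[OF assms(2)] by simp
  then have "?X \<in> ideal_mult J K"
    by (simp add: IJK)
  then obtain ps where "\<And>n. n < st_order y J + st_order y K \<Longrightarrow> coeff (subst_st y ?X) n = 0"
    using coeff_subst_st_ideal_mult[OF assms(4)] by metis
  then show "st_order y J + st_order y K \<le> Max B"
    using subst_st_monXY_Max_0[OF assms(3), of B] by (metis coeff_monom not_le one_neq_zero)
  obtain f g where fg: "f \<in> J" "g \<in> K" and "coeff (subst_st y f) (st_order y J) \<noteq> 0"
    and "coeff (subst_st y g) (st_order y K) \<noteq> 0"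
    using ex_coeff_subst_st_st_order_I_B[OF assms(2,3)] IJK assms(4,5)
      ideal_mult_subset_left ideal_mult_subset_right by metis
  then have "coeff (subst_st y (f * g)) (st_order y J + st_order y K) \<noteq> 0"
    by (simp add: coeff_subst_st_mult_st_orders)
  moreover have "f * g \<in> I_B x y B"
    using IJK mult_mem_ideal_mult[OF fg] by simp
  ultimately show "Max B \<le> st_order y J + st_order y K"
    using coeff_subst_st_I_B_less[OF assms(1)] not_le by blast
qed

lemma I_B_factor_st_order_0:
  fixes J K :: "('n::finite, 'a::idom) mpoly set"
  assumes BF: "ideals_BF TYPE(('n, 'a) mpoly)"
    and B: "finite B" "0 \<in> B" "0 < Max B" and "x \<noteq> y"
    and J: "J \<in> nz_ideals" and K: "K \<in> nz_ideals" and IJK: "I_B x y B = ideal_mult J K"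
    and "st_order y J = 0"
  shows "J = UNIV"
proof -
  have "is_ideal J" "is_ideal K"
    using J K by (simp_all add: nz_ideals_def)
  obtain f0 where "f0 \<in> J" "coeff (subst_st y f0) 0 \<noteq> 0"
    using ex_coeff_subst_st_st_order_I_B[OF B(2) \<open>x \<noteq> y\<close>] IJK ideal_mult_subset_left[OF \<open>is_ideal J\<close>]
      \<open>st_order y J = 0\<close> by metis
  then have "K = I_B x y B"
    using monomial_ideal_factor_eq[OF I_B_exponents_add IJK[unfolded I_B_eq] \<open>is_ideal K\<close>]
    by (simp add: coeff_subst_st_0 I_B_eq)
  then have "I_B x y B = ideal_mult J (I_B x y B)"
    using IJK by simp
  then show ?thesis
    using ideals_BF_mult_eq_imp_UNIV[OF BF I_B_nz_ideal_not_UNIV[OF B] J] by simp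
qed

lemma I_B_factor_initial_forms_support:
  fixes J K :: "('n::finite, 'a::comm_ring_1) mpoly set"
  assumes "finite B" "x \<noteq> y" and IJK: "I_B x y B = ideal_mult J K"
    and orders: "st_order y J + st_order y K = Max B"
    and "P \<in> initial_forms y J" "Q \<in> initial_forms y K" "coeff (P * Q) k \<noteq> 0"
  shows "k \<in> B"
proof -
  obtain f g where fg: "f \<in> J" "g \<in> K" "P = coeff (subst_st y f) (st_order y J)"
    "Q = coeff (subst_st y g) (st_order y K)"
    using assms(5,6) unfolding initial_forms_def by blast
  then have "coeff (coeff (subst_st y (f * g)) (Max B)) k \<noteq> 0"
    using assms(7) coeff_subst_st_mult_st_orders[of f J g K y] orders by simp
  moreover have "f * g \<in> I_B x y B"
    using IJK mult_mem_ideal_mult[OF fg(1,2)] by simp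
  ultimately show ?thesis
    using coeff_coeff_subst_st_I_B_Max[OF assms(1,2)] by blast
qed

lemma I_B_factor_initial_forms_sum_eq_1:
  fixes J K :: "('n::finite, 'a::idom) mpoly set"
  assumes "finite B" "0 \<in> B" "x \<noteq> y" "is_ideal J" "is_ideal K"
    and IJK: "I_B x y B = ideal_mult J K"
  obtains ps where "set ps \<subseteq> initial_forms y J \<times> initial_forms y K" "(\<Sum>(P, Q)\<leftarrow>ps. P * Q) = 1"
proof -
  have "monXY x y (Max B) 0 \<in> (I_B x y B :: ('n, 'a) mpoly set)"
    using monXY_mem_I_B[OF assms(2)] by simp
  then show ?thesis
    using coeff_subst_st_ideal_mult[OF assms(4), of "monXY x y (Max B) 0" K y] that IJK
      I_B_factor_st_orders[OF assms] subst_st_monXY_Max_0[OF assms(3)]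
    by (metis coeff_monom one_poly_eq_simps(1))
qed

lemma I_B_factor_initial_forms_top_coeffs:
  fixes J K :: "('n::finite, 'a::idom) mpoly set"
  assumes "finite B" "0 \<in> B" "x \<noteq> y" "is_ideal J" "is_ideal K"
    and IJK: "I_B x y B = ideal_mult J K"
  obtains P Q where "P \<in> initial_forms y J" "coeff P (st_order y J) \<noteq> 0"
    and "Q \<in> initial_forms y K" "coeff Q (st_order y K) \<noteq> 0"
proof -
  have orders: "st_order y J + st_order y K = Max B"
    by (rule I_B_factor_st_orders[OF assms])
  have "Max B \<in> B"
    using assms(1,2) by (intro Max_in) auto
  then have "monXY x y 0 (Max B) \<in> (I_B x y B :: ('n, 'a) mpoly set)"
    using monXY_mem_I_B by fastforce
  then obtain qs where qs: "set qs \<subseteq> initial_forms y J \<times> initial_forms y K"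
    "(\<Sum>(P, Q)\<leftarrow>qs. P * Q) = monom 1 (Max B)"
    using coeff_subst_st_ideal_mult[OF assms(4), of "monXY x y 0 (Max B)" K y] IJK orders
      subst_st_monXY[OF assms(3), of 0 "Max B"]
    by (metis add_0 coeff_monom)
  then obtain P Q where "(P, Q) \<in> set qs" "coeff (P * Q) (st_order y J + st_order y K) \<noteq> 0"
    using ex_coeff_mult_nonzero[of qs "Max B"] orders by auto
  moreover from this have "P \<in> initial_forms y J" "Q \<in> initial_forms y K"
    using qs(1) by auto
  ultimately show ?thesis
    using that by (simp add: coeff_mult_at_degree_bounds degree_initial_form_le)
qed

lemma I_B_factor_st_orders_not_both_pos:
  fixes J K :: "('n::finite, 'a::idom) mpoly set"
  assumes "finite A" "sum_free A" "x \<noteq> y" "is_ideal J" "is_ideal K"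
    and IJK: "I_B x y (insert 0 A) = ideal_mult J K"
  shows "st_order y J = 0 \<or> st_order y K = 0"
proof -
  have B: "finite (insert 0 A)" "0 \<in> insert 0 A"
    using assms(1) by simp_all
  obtain ps where ps: "set ps \<subseteq> initial_forms y J \<times> initial_forms y K"
    "(\<Sum>(P, Q)\<leftarrow>ps. P * Q) = 1"
    using I_B_factor_initial_forms_sum_eq_1[OF B assms(3-5) IJK] .
  note supp = I_B_factor_initial_forms_support[OF B(1) assms(3) IJK I_B_factor_st_orders[OF B assms(3-5) IJK]]
  have "(\<forall>P\<in>initial_forms y J. degree P = 0) \<or> (\<forall>Q\<in>initial_forms y K. degree Q = 0)"
    by (rule sum_free_support_imp_constant[OF subspace_initial_forms[OF assms(4)]
        subspace_initial_forms[OF assms(5)] assms(2) _ ps]) (fact supp)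
  moreover obtain P Q where "P \<in> initial_forms y J" "coeff P (st_order y J) \<noteq> 0"
    and "Q \<in> initial_forms y K" "coeff Q (st_order y K) \<noteq> 0"
    using I_B_factor_initial_forms_top_coeffs[OF B assms(3-5) IJK] .
  ultimately show ?thesis
    using le_degree by fastforce
qed

theorem theorem3p3:
  fixes x y :: "'n::finite"
  assumes "card (UNIV :: 'n set) \<ge> 2"
    and "x \<noteq> y"
    and "ideals_BF TYPE(('n, 'a::idom) mpoly)"
    and "finite A" and "A \<noteq> {}" and "sum_free A"
  shows "ideal_atom (I_B x y (insert 0 A) :: ('n, 'a) mpoly set)"
proof -
  \<comment> \<open>The hypothesis on \<open>card UNIV\<close> is implied by \<open>x \<noteq> y\<close> and not needed.\<close>
  define B where "B = insert 0 A"
  have "0 \<notin> A"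
    using \<open>sum_free A\<close> unfolding sum_free_def by force
  then have B: "finite B" "0 \<in> B" "0 < Max B"
    using assms(4,5) by (auto simp: B_def Max_gr_iff)
  show ?thesis
    unfolding ideal_atom_def B_def[symmetric]
  proof (intro conjI I_B_nz_ideal_not_UNIV[OF B] ballI impI)
    fix J K :: "('n, 'a) mpoly set"
    assume J: "J \<in> nz_ideals" and K: "K \<in> nz_ideals" and IJK: "I_B x y B = ideal_mult J K"
    have "st_order y J = 0 \<or> st_order y K = 0"
      using J K IJK by (intro I_B_factor_st_orders_not_both_pos[OF assms(4,6,2)])
        (simp_all add: nz_ideals_def B_def)
    then show "J = UNIV \<or> K = UNIV"
      using I_B_factor_st_order_0[OF assms(3) B assms(2) J K IJK]
        I_B_factor_st_order_0[OF assms(3) B assms(2) K J] IJK ideal_mult_commute by metis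
  qed
qed

end
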